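(* Let $T$ be a tree with root $r$, edges directed towards $r$, edge set $E$, and let $B,R$ be disjoint sets of leaves of $T$. For every $Y\subseteq E$, the set $\bar b(Y)$ is legal for the function $c:V(T)\to\mathbb{Z}$, $c(v)=A(v,Y)$.
   Context: Edges are ordered pairs $st$ pointing from $s$ to $t$, directed towards $r$; a leaf is a vertex with no incoming edges. For an edge set $X$, $V(X)$ is the set of vertices incident with an edge of $X$. $A(v,X)$ is the number of edges of $X$ pointing to $v$ minus the number of edges of $X$ pointing away from $v$, and $A(v,X,Y)=A(v,X)-A(v,Y)$. The \emph{blue overflow} $\bar b(Y)$ of $Y\subseteq E$ is defined by transfinite recursion: $Y_0$ is the set of all edges in $E\setminus Y$ whose starting vertex is in $B$; at a successor $\alpha=\beta+1$, if every $st\in E\setminus(Y\cup Y_\beta)$ satisfies $A(s,Y_\beta,Y)\le 0$, stop and set $\bar b(Y)=Y_\beta$; otherwise pick some $st\in E\setminus (Y\cup Y_\beta)$ with $A(s,Y_\beta,Y)\ge 1$ and let $Y_\alpha=Y_\beta\cup\{st\}$; at limits $Y_\alpha=\bigcup_{\beta<\alpha}Y_\beta$. (The result does not depend on the choices made.) A \emph{leafless forest} is an edge set $S$ such that the subforest $(V(S),S)$ of $T$ has no leaf (i.e. no vertex without an incoming edge of $S$). Given an edge set $X$ and $c:V(T)\to\mathbb{Z}$, a subset $S\subseteq X$ is \emph{illegal} for $c$ if $S$ is a leafless forest and $A(s,X\setminus S)\le c(s)$ for all $st\in S$. $X$ is \emph{legal} for $c$ if no nonempty subset of $X$ is illegal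 for $c$. *)

theory Defs
  imports Main
begin

text \<open>Edges are ordered pairs (s,t) pointing from s to t.\<close>

definition rooted_tree :: "'v set \<Rightarrow> ('v \<times> 'v) set \<Rightarrow> 'v \<Rightarrow> bool" where
  "rooted_tree V E r \<longleftrightarrow>
     E \<subseteq> V \<times> V \<and> r \<in> V \<and>
     (\<forall>v\<in>V - {r}. \<exists>!t. (v, t) \<in> E) \<and>
     (\<forall>t. (r, t) \<notin> E) \<and>
     (\<forall>v\<in>V. (v, r) \<in> E\<^sup>*)"

text \<open>Each vertex has finitely many incoming edges (so that the counts A(v,X) are integers).\<close>
definition locally_finite :: "'v set \<Rightarrow> ('v \<times> 'v) set \<Rightarrow> bool" where
  "locally_finite V E \<longleftrightarrow> (\<forall>v\<in>V. finite {s. (s, v) \<in> E})"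

definition is_leaf :: "('v \<times> 'v) set \<Rightarrow> 'v \<Rightarrow> bool" where
  "is_leaf E v \<longleftrightarrow> (\<forall>s. (s, v) \<notin> E)"

definition verts :: "('v \<times> 'v) set \<Rightarrow> 'v set" where
  "verts X = fst ` X \<union> snd ` X"

definition A :: "'v \<Rightarrow> ('v \<times> 'v) set \<Rightarrow> int" where
  "A v X = int (card {e\<in>X. snd e = v}) - int (card {e\<in>X. fst e = v})"

definition A2 :: "'v \<Rightarrow> ('v \<times> 'v) set \<Rightarrow> ('v \<times> 'v) set \<Rightarrow> int" where
  "A2 v X Y = A v X - A v Y"

text \<open>Stages Y_alpha of the transfinite recursion defining the blue overflow (any choices).\<close>
inductive bo_stage :: "('v \<times> 'v) set \<Rightarrow> 'v set \<Rightarrow> ('v \<times> 'v) set \<Rightarrow> ('v \<times> 'v) set \<Rightarrow> bool"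
  for E B Y where
  base: "bo_stage E B Y {e \<in> E - Y. fst e \<in> B}"
| step: "bo_stage E B Y Z \<Longrightarrow> (s, t) \<in> E - (Y \<union> Z) \<Longrightarrow> A2 s Z Y \<ge> 1
          \<Longrightarrow> bo_stage E B Y (insert (s, t) Z)"
| limit: "C \<noteq> {} \<Longrightarrow> Complete_Partial_Order.chain (\<subseteq>) C \<Longrightarrow> (\<forall>Z\<in>C. bo_stage E B Y Z)
          \<Longrightarrow> bo_stage E B Y (\<Union>C)"

definition blue_overflow :: "('v \<times> 'v) set \<Rightarrow> 'v set \<Rightarrow> ('v \<times> 'v) set \<Rightarrow> ('v \<times> 'v) set" where
  "blue_overflow E B Y = (THE Z. bo_stage E B Y Z \<and>
      (\<forall>(s, t) \<in> E - (Y \<union> Z). A2 s Z Y \<le> 0))"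

definition leafless_forest :: "('v \<times> 'v) set \<Rightarrow> ('v \<times> 'v) set \<Rightarrow> bool" where
  "leafless_forest E S \<longleftrightarrow> S \<subseteq> E \<and> (\<forall>v\<in>verts S. \<exists>s. (s, v) \<in> S)"

definition illegal :: "('v \<times> 'v) set \<Rightarrow> ('v \<times> 'v) set \<Rightarrow> ('v \<Rightarrow> int) \<Rightarrow> ('v \<times> 'v) set \<Rightarrow> bool" where
  "illegal E X c S \<longleftrightarrow> S \<subseteq> X \<and> leafless_forest E S \<and>
     (\<forall>(s, t) \<in> S. A s (X - S) \<le> c s)"

definition legal :: "('v \<times> 'v) set \<Rightarrow> ('v \<times> 'v) set \<Rightarrow> ('v \<Rightarrow> int) \<Rightarrow> bool" where
  "legal E X c \<longleftrightarrow> (\<forall>S. S \<subseteq> X \<and> S \<noteq> {} \<longrightarrow> \<not> illegal E X c S)"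

end

theory Submission
  imports Defs
begin

text \<open>Every stage of the recursion lies inside every set W \<subseteq> E that contains the starting set
and at which the recursion would stop: a new edge st is only added once A(s,\<cdot>) exceeds A(s,Y),
and A(s,\<cdot>) only grows when passing to W, since in a tree no edge of W other than st itself
leaves s. Hence the blue overflow is the least such W. If S were a nonempty illegal subset of
the blue overflow X, then X - S would again be such a set: S avoids the edges leaving B because
those start at leaves, and the legality bound A(s, X - S) \<le> A(s, Y) for st \<in> S is exactly the
stopping condition. This contradicts the minimality of X.\<close>

lemma rooted_tree_out_edge_unique:
  assumes "rooted_tree V E r" "(s, t) \<in> E" "(s, t') \<in> E"
  shows "t = t'"
proof -
  have "s \<in> V" "s \<noteq> r" using assms unfolding rooted_tree_def by auto
  then show ?thesis using assms unfolding rooted_tree_def by blast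
qed

lemma locally_finite_in_edges:
  assumes "rooted_tree V E r" "locally_finite V E" "W \<subseteq> E"
  shows "finite {e \<in> W. snd e = v}"
proof (cases "v \<in> V")
  case True
  have "{e \<in> W. snd e = v} \<subseteq> (\<lambda>s. (s, v)) ` {s. (s, v) \<in> E}" using assms(3) by force
  moreover have "finite {s. (s, v) \<in> E}" using assms(2) True unfolding locally_finite_def by auto
  ultimately show ?thesis by (meson finite_imageI finite_subset)
next
  case False
  have "E \<subseteq> V \<times> V" using assms(1) unfolding rooted_tree_def by auto
  then have "{e \<in> W. snd e = v} = {}" using False assms(3) by force
  then show ?thesis by (simp only: finite.emptyI)
qed

lemma A_mono_if_out_edge_notin:
  assumes "rooted_tree V E r" "locally_finite V E" "Z \<subseteq> W" "W \<subseteq> E"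
    and "(s, t) \<in> E" "(s, t) \<notin> W"
  shows "A s Z \<le> A s W"
proof -
  have no_out: "{e \<in> Q. fst e = s} = {}" if "Q \<subseteq> W" for Q
  proof (rule ccontr)
    assume "{e \<in> Q. fst e = s} \<noteq> {}"
    then obtain t' where "(s, t') \<in> Q" by force
    moreover have "t' = t" if "(s, t') \<in> W"
      using rooted_tree_out_edge_unique[OF assms(1) _ assms(5)] that assms(4) by blast
    ultimately show False using \<open>Q \<subseteq> W\<close> assms(6) by blast
  qed
  have "card {e \<in> Z. snd e = s} \<le> card {e \<in> W. snd e = s}"
    using assms(3) by (intro card_mono[OF locally_finite_in_edges[OF assms(1,2,4)]]) auto
  then show ?thesis unfolding A_def no_out[OF assms(3)] no_out[OF order_refl] by simp
qed

definition overflow_stops :: "('v \<times> 'v) set \<Rightarrow> ('v \<times> 'v) set \<Rightarrow> ('v \<times> 'v) set \<Rightarrow> bool" where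
  "overflow_stops E Y Z \<longleftrightarrow> (\<forall>(s, t) \<in> E - (Y \<union> Z). A2 s Z Y \<le> 0)"

definition overflow_closed :: "('v \<times> 'v) set \<Rightarrow> 'v set \<Rightarrow> ('v \<times> 'v) set \<Rightarrow> ('v \<times> 'v) set \<Rightarrow> bool" where
  "overflow_closed E B Y W \<longleftrightarrow>
     W \<subseteq> E \<and> {e \<in> E - Y. fst e \<in> B} \<subseteq> W \<and> overflow_stops E Y W"

lemma bo_stage_subset: "bo_stage E B Y Z \<Longrightarrow> Z \<subseteq> E"
  by (induction rule: bo_stage.induct) auto

lemma bo_stage_base_subset: "bo_stage E B Y Z \<Longrightarrow> {e \<in> E - Y. fst e \<in> B} \<subseteq> Z"
proof (induction rule: bo_stage.induct)
  case (limit C)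
  then show ?case by blast
qed auto

lemma bo_stage_stops_closed:
  "bo_stage E B Y Z \<Longrightarrow> overflow_stops E Y Z \<Longrightarrow> overflow_closed E B Y Z"
  unfolding overflow_closed_def using bo_stage_subset bo_stage_base_subset by blast

lemma bo_stage_subset_closed:
  assumes "rooted_tree V E r" "locally_finite V E" "overflow_closed E B Y W"
    and "bo_stage E B Y Z"
  shows "Z \<subseteq> W"
  using assms(4)
proof (induction rule: bo_stage.induct)
  case base
  then show ?case using assms(3) unfolding overflow_closed_def by blast
next
  case (step Z s t)
  have "(s, t) \<in> W"
  proof (rule ccontr)
    assume notin: "(s, t) \<notin> W"
    then have "A2 s W Y \<le> 0"
      using assms(3) step.hyps(2) unfolding overflow_closed_def overflow_stops_def by auto
    moreover have "A s Z \<le> A s W"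
      using assms(3) step notin unfolding overflow_closed_def
      by (intro A_mono_if_out_edge_notin[OF assms(1,2)]) auto
    ultimately show False using step.hyps(3) unfolding A2_def by simp
  qed
  then show ?case using step.IH by simp
next
  case (limit C)
  then show ?case by blast
qed

lemma bo_stage_stops_exists: "\<exists>Z. bo_stage E B Y Z \<and> overflow_stops E Y Z"
proof -
  let ?Stages = "{Z. bo_stage E B Y Z}"
  have "\<exists>M\<in>?Stages. \<forall>Z\<in>?Stages. M \<subseteq> Z \<longrightarrow> Z = M"
  proof (rule subset_Zorn_nonempty)
    show "?Stages \<noteq> {}" using bo_stage.base by blast
  next
    fix C assume "C \<noteq> {}" "subset.chain ?Stages C"
    then show "\<Union>C \<in> ?Stages"
      by (intro CollectI bo_stage.limit)
         (auto simp: subset.chain_def Complete_Partial_Order.chain_def)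
  qed
  then obtain M where M: "bo_stage E B Y M" and maximal: "\<forall>Z\<in>?Stages. M \<subseteq> Z \<longrightarrow> Z = M"
    by auto
  have "overflow_stops E Y M"
    unfolding overflow_stops_def
  proof (clarify, rule ccontr)
    fix s t assume st: "(s, t) \<in> E" "(s, t) \<notin> Y" "(s, t) \<notin> M" "\<not> A2 s M Y \<le> 0"
    then have "bo_stage E B Y (insert (s, t) M)" using bo_stage.step[OF M] by auto
    then show False using maximal st(3) by blast
  qed
  with M show ?thesis by blast
qed

lemma blue_overflow_least_closed:
  assumes "rooted_tree V E r" "locally_finite V E"
  shows "overflow_closed E B Y (blue_overflow E B Y)"
    and "overflow_closed E B Y W \<Longrightarrow> blue_overflow E B Y \<subseteq> W"
proof -
  obtain X where X: "bo_stage E B Y X" "overflow_stops E Y X"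
    using bo_stage_stops_exists by blast
  have X_closed: "overflow_closed E B Y X" using bo_stage_stops_closed[OF X] .
  have X_least: "X \<subseteq> W" if "overflow_closed E B Y W" for W
    using bo_stage_subset_closed[OF assms that X(1)] .
  have "Z = X" if "bo_stage E B Y Z \<and> overflow_stops E Y Z" for Z
  proof (rule subset_antisym)
    show "Z \<subseteq> X" using bo_stage_subset_closed[OF assms X_closed] that by blast
    show "X \<subseteq> Z" using X_least bo_stage_stops_closed that by blast
  qed
  then have "blue_overflow E B Y = X"
    unfolding blue_overflow_def[folded overflow_stops_def]
    by (rule the_equality[where P = "\<lambda>Z. bo_stage E B Y Z \<and> overflow_stops E Y Z",
          OF conjI[OF X]])
  then show "overflow_closed E B Y (blue_overflow E B Y)"
    and "overflow_closed E B Y W \<Longrightarrow> blue_overflow E B Y \<subseteq> W"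
    using X_closed X_least by simp_all
qed

lemma illegal_complement_closed:
  assumes "rooted_tree V E r" "locally_finite V E"
    and closed: "overflow_closed E B Y X"
    and leaves: "\<forall>v\<in>B. is_leaf E v"
    and ill: "illegal E X (\<lambda>v. A v Y) S"
  shows "overflow_closed E B Y (X - S)"
proof -
  have SX: "S \<subseteq> X" and XE: "X \<subseteq> E" using ill closed unfolding illegal_def overflow_closed_def by auto
  have "fst e \<notin> B" if "e \<in> S" for e
  proof
    assume "fst e \<in> B"
    have "fst e \<in> verts S" using \<open>e \<in> S\<close> unfolding verts_def by blast
    then obtain s' where "(s', fst e) \<in> S" using ill unfolding illegal_def leafless_forest_def by blast
    then show False using SX XE leaves \<open>fst e \<in> B\<close> unfolding is_leaf_def by blast
  qed
  then have base: "{e \<in> E - Y. fst e \<in> B} \<subseteq> X - S" using closed unfolding overflow_closed_def by blast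
  have "A2 s (X - S) Y \<le> 0" if st: "(s, t) \<in> E - (Y \<union> (X - S))" for s t
  proof (cases "(s, t) \<in> S")
    case True
    then have "A s (X - S) \<le> A s Y" using ill unfolding illegal_def by blast
    then show ?thesis unfolding A2_def by simp
  next
    case False
    then have notin: "(s, t) \<in> E - (Y \<union> X)" using st by blast
    then have "A2 s X Y \<le> 0" using closed unfolding overflow_closed_def overflow_stops_def by blast
    moreover have "A s (X - S) \<le> A s X"
      using notin XE by (intro A_mono_if_out_edge_notin[OF assms(1,2)]) auto
    ultimately show ?thesis unfolding A2_def by simp
  qed
  then have "overflow_stops E Y (X - S)" unfolding overflow_stops_def by blast
  then show ?thesis using XE base unfolding overflow_closed_def by blast
qed

theorem lemma2p7:
  fixes V :: "'v set" and E :: "('v \<times> 'v) set" and r :: 'v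
    and B R :: "'v set" and Y :: "('v \<times> 'v) set"
  assumes "rooted_tree V E r"
    and "locally_finite V E"
    and "B \<subseteq> V" and "R \<subseteq> V" and "B \<inter> R = {}"
    and "\<forall>v\<in>B. is_leaf E v" and "\<forall>v\<in>R. is_leaf E v"
    and "Y \<subseteq> E"
  shows "legal E (blue_overflow E B Y) (\<lambda>v. A v Y)"
  unfolding legal_def
proof (intro allI impI notI)
  let ?X = "blue_overflow E B Y"
  fix S assume S: "S \<subseteq> ?X \<and> S \<noteq> {}" and ill: "illegal E ?X (\<lambda>v. A v Y) S"
  have "overflow_closed E B Y (?X - S)"
    using illegal_complement_closed[OF assms(1,2) blue_overflow_least_closed(1)[OF assms(1,2)]
        assms(6) ill] .
  then have "?X \<subseteq> ?X - S" using blue_overflow_least_closed(2)[OF assms(1,2)] by blast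
  then show False using S by blast
qed

end
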